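(* Let $\mathbb K$ be an algebraically closed field and let $q\in\mathbb K$ be nonzero and not a root of unity. Let $U_q(\widehat{sl}_2)$ be the unital associative $\mathbb K$-algebra with generators $e^{\pm}_i, K_i^{\pm1}$ ($i\in\{0,1\}$) and relations $K_iK_i^{-1}=K_i^{-1}K_i=1$; $K_0K_1=K_1K_0$; $K_ie^{\pm}_iK_i^{-1}=q^{\pm2}e^{\pm}_i$; $K_ie^{\pm}_jK_i^{-1}=q^{\mp2}e^{\pm}_j$ for $i\neq j$; $[e^+_i,e^-_i]=\frac{K_i-K_i^{-1}}{q-q^{-1}}$; $[e^{\pm}_0,e^{\mp}_1]=0$; and $(e^{\pm}_i)^3e^{\pm}_j-[3]_q(e^{\pm}_i)^2e^{\pm}_je^{\pm}_i+[3]_qe^{\pm}_ie^{\pm}_j(e^{\pm}_i)^2-e^{\pm}_j(e^{\pm}_i)^3=0$ for $i\neq j$. Let $\mathcal U$ be the unital associative $\mathbb K$-algebra with generators $y^{\pm}_i, k_i^{\pm1}$ ($i\in\{0,1\}$) and relations $k_ik_i^{-1}=k_i^{-1}k_i=1$; $k_0k_1$ is central; $\frac{qy^+_ik_i-q^{-1}k_iy^+_i}{q-q^{-1}}=1$; $\frac{qk_iy^-_i-q^{-1}y^-_ik_i}{q-q^{-1}}=1$; $\frac{qy^-_iy^+_i-q^{-1}y^+_iy^-_i}{q-q^{-1}}=1$; $\frac{qy^+_iy^-_j-q^{-1}y^-_jy^+_i}{q-q^{-1}}=k_0^{-1}k_1^{-1}$ for $i\neq j$; and $(y^{\pm}_i)^3y^{\pm}_j-[3]_q(y^{\pm}_i)^2y^{\pm}_jy^{\pm}_i+[3]_qy^{\pm}_iy^{\pm}_j(y^{\pm}_i)^2-y^{\pm}_j(y^{\pm}_i)^3=0$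 for $i\neq j$. Then there is an isomorphism of $\mathbb K$-algebras $\mathcal U\to U_q(\widehat{sl}_2)$ given by $k_i^{\pm1}\mapsto K_i^{\pm1}$, $y^-_i\mapsto K_i^{-1}+e^-_i$, $y^+_i\mapsto K_i^{-1}-q(q-q^{-1})^2K_i^{-1}e^+_i$, whose inverse is given by $K_i^{\pm1}\mapsto k_i^{\pm1}$, $e^-_i\mapsto y^-_i-k_i^{-1}$, $e^+_i\mapsto \frac{1-k_iy^+_i}{q(q-q^{-1})^2}$.
   Context: $[n]_q=\frac{q^n-q^{-n}}{q-q^{-1}}$ for $n\ge 0$; $[X,Y]=XY-YX$. *)

theory Defs
  imports "HOL-Library.Poly_Mapping" "HOL-Computational_Algebra.Polynomial"
begin

text \<open>The free unital associative algebra over a field 'k on a set of generators 'g: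
  finitely supported functions from words (lists of generators) to 'k, with the
  concatenation (convolution) product.\<close>

type_synonym ('g, 'k) freealg = "'g list \<Rightarrow>\<^sub>0 'k"

definition fmul :: "('g, 'k::field) freealg \<Rightarrow> ('g, 'k) freealg \<Rightarrow> ('g, 'k) freealg"
  (infixl "\<cdot>" 70) where
  "fmul p r = (\<Sum>u\<in>Poly_Mapping.keys p. \<Sum>v\<in>Poly_Mapping.keys r. Poly_Mapping.single (u @ v) (Poly_Mapping.lookup p u * Poly_Mapping.lookup r v))"

definition cst :: "'k::field \<Rightarrow> ('g, 'k) freealg" where
  "cst c = Poly_Mapping.single [] c"

definition fone :: "('g, 'k::field) freealg" where
  "fone = cst 1"

definition gen :: "'g \<Rightarrow> ('g, 'k::field) freealg" where
  "gen a = Poly_Mapping.single [a] 1"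

definition wordval :: "('g \<Rightarrow> ('h, 'k::field) freealg) \<Rightarrow> 'g list \<Rightarrow> ('h, 'k) freealg" where
  "wordval \<phi> w = foldr (\<lambda>a acc. \<phi> a \<cdot> acc) w fone"

definition subst :: "('g \<Rightarrow> ('h, 'k::field) freealg) \<Rightarrow> ('g, 'k) freealg \<Rightarrow> ('h, 'k) freealg" where
  "subst \<phi> p = (\<Sum>w\<in>Poly_Mapping.keys p. cst (Poly_Mapping.lookup p w) \<cdot> wordval \<phi> w)"

inductive_set ideal_gen :: "('g, 'k::field) freealg set \<Rightarrow> ('g, 'k) freealg set"
  for R :: "('g, 'k) freealg set" where
  base: "r \<in> R \<Longrightarrow> r \<in> ideal_gen R"
| zero: "0 \<in> ideal_gen R"
| add: "a \<in> ideal_gen R \<Longrightarrow> b \<in> ideal_gen R \<Longrightarrow> a + b \<in> ideal_gen R"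
| mul: "a \<in> ideal_gen R \<Longrightarrow> u \<cdot> a \<cdot> v \<in> ideal_gen R"

definition alg_closed :: "'k::field itself \<Rightarrow> bool" where
  "alg_closed _ \<longleftrightarrow> (\<forall>p :: 'k poly. degree p > 0 \<longrightarrow> (\<exists>x. poly p x = 0))"

definition qint :: "'k::field \<Rightarrow> nat \<Rightarrow> 'k" where
  "qint q n = (q ^ n - inverse q ^ n) / (q - inverse q)"

datatype ix = I0 | I1
datatype sg = Pl | Mi

fun flip :: "sg \<Rightarrow> sg" where "flip Pl = Mi" | "flip Mi = Pl"

fun q2 :: "'k::field \<Rightarrow> sg \<Rightarrow> 'k" where
  "q2 q Pl = q ^ 2" | "q2 q Mi = inverse q ^ 2"

definition serre :: "'k::field \<Rightarrow> ('g, 'k) freealg \<Rightarrow> ('g, 'k) freealg \<Rightarrow> ('g, 'k) freealg" where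
  "serre q x z = x \<cdot> x \<cdot> x \<cdot> z - cst (qint q 3) \<cdot> x \<cdot> x \<cdot> z \<cdot> x
     + cst (qint q 3) \<cdot> x \<cdot> z \<cdot> x \<cdot> x - z \<cdot> x \<cdot> x \<cdot> x"

datatype gUq = E sg ix | Kp ix | Km ix  (* e^{\<pm>}_i, K_i, K_i^{-1} *)

inductive_set relUq :: "'k::field \<Rightarrow> (gUq, 'k) freealg set" for q :: 'k where
  "gen (Kp i) \<cdot> gen (Km i) - fone \<in> relUq q"
| "gen (Km i) \<cdot> gen (Kp i) - fone \<in> relUq q"
| "gen (Kp I0) \<cdot> gen (Kp I1) - gen (Kp I1) \<cdot> gen (Kp I0) \<in> relUq q"
| "gen (Kp i) \<cdot> gen (E s i) \<cdot> gen (Km i) - cst (q2 q s) \<cdot> gen (E s i) \<in> relUq q"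
| "i \<noteq> j \<Longrightarrow> gen (Kp i) \<cdot> gen (E s j) \<cdot> gen (Km i) - cst (q2 q (flip s)) \<cdot> gen (E s j) \<in> relUq q"
| "gen (E Pl i) \<cdot> gen (E Mi i) - gen (E Mi i) \<cdot> gen (E Pl i)
     - cst (1 / (q - inverse q)) \<cdot> (gen (Kp i) - gen (Km i)) \<in> relUq q"
| "gen (E s I0) \<cdot> gen (E (flip s) I1) - gen (E (flip s) I1) \<cdot> gen (E s I0) \<in> relUq q"
| "i \<noteq> j \<Longrightarrow> serre q (gen (E s i)) (gen (E s j)) \<in> relUq q"

datatype gU = Y sg ix | kp ix | km ix  (* y^{\<pm>}_i, k_i, k_i^{-1} *)

inductive_set relU :: "'k::field \<Rightarrow> (gU, 'k) freealg set" for q :: 'k where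
  "gen (kp i) \<cdot> gen (km i) - fone \<in> relU q"
| "gen (km i) \<cdot> gen (kp i) - fone \<in> relU q"
| "gen (kp I0) \<cdot> gen (kp I1) \<cdot> gen g - gen g \<cdot> gen (kp I0) \<cdot> gen (kp I1) \<in> relU q"
| "cst (1 / (q - inverse q)) \<cdot> (cst q \<cdot> gen (Y Pl i) \<cdot> gen (kp i) - cst (inverse q) \<cdot> gen (kp i) \<cdot> gen (Y Pl i))
     - fone \<in> relU q"
| "cst (1 / (q - inverse q)) \<cdot> (cst q \<cdot> gen (kp i) \<cdot> gen (Y Mi i) - cst (inverse q) \<cdot> gen (Y Mi i) \<cdot> gen (kp i))
     - fone \<in> relU q"
| "cst (1 / (q - inverse q)) \<cdot> (cst q \<cdot> gen (Y Mi i) \<cdot> gen (Y Pl i) - cst (inverse q) \<cdot> gen (Y Pl i) \<cdot> gen (Y Mi i))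
     - fone \<in> relU q"
| "i \<noteq> j \<Longrightarrow> cst (1 / (q - inverse q)) \<cdot> (cst q \<cdot> gen (Y Pl i) \<cdot> gen (Y Mi j) - cst (inverse q) \<cdot> gen (Y Mi j) \<cdot> gen (Y Pl i))
     - gen (km I0) \<cdot> gen (km I1) \<in> relU q"
| "i \<noteq> j \<Longrightarrow> serre q (gen (Y s i)) (gen (Y s j)) \<in> relU q"

fun phi :: "'k::field \<Rightarrow> gU \<Rightarrow> (gUq, 'k) freealg" where
  "phi q (kp i) = gen (Kp i)"
| "phi q (km i) = gen (Km i)"
| "phi q (Y Mi i) = gen (Km i) + gen (E Mi i)"
| "phi q (Y Pl i) = gen (Km i) - cst (q * (q - inverse q) ^ 2) \<cdot> gen (Km i) \<cdot> gen (E Pl i)"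

fun psi :: "'k::field \<Rightarrow> gUq \<Rightarrow> (gU, 'k) freealg" where
  "psi q (Kp i) = gen (kp i)"
| "psi q (Km i) = gen (km i)"
| "psi q (E Mi i) = gen (Y Mi i) - gen (km i)"
| "psi q (E Pl i) = cst (1 / (q * (q - inverse q) ^ 2)) \<cdot> (fone - gen (kp i) \<cdot> gen (Y Pl i))"

end

theory Submission
  imports Defs
begin

text \<open>
  Both maps are given on generators, so it suffices to check that the images of the generators satisfy
  the defining relations of the target and that both composites fix the generators modulo the
  relations. Apart from the Serre relations, all relations are q-commutation rules, which serve as
  rewrite rules in any ring in which q, q^-1 and 1/(q - q^-1) are central. The Serre relations carry
  over because adding to x and z units that q^2-commute with them does not change the Serre
  expression, and multiplying x and z by such units multiplies it by a unit.
  To have such a ring at all, q is turned into a variable: families of free algebra elements indexed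
  by q, modulo the relations at every q with q^2 \<noteq> 1, form a ring in which q is central.
\<close>

section \<open>The free algebra as a ring\<close>

(* With words as a monoid under concatenation, the convolution product of Poly_Mapping is fmul. *)
instantiation list :: (type) monoid_add
begin
definition zero_list :: "'a list" where "zero_list = []"
definition plus_list :: "'a list \<Rightarrow> 'a list \<Rightarrow> 'a list" where "plus_list xs ys = xs @ ys"
instance by standard (auto simp: zero_list_def plus_list_def)
end

lemma sum_single_lookup: "(\<Sum>u\<in>Poly_Mapping.keys p. Poly_Mapping.single u (Poly_Mapping.lookup p u)) = p"
  by (rule poly_mapping_eqI) (simp add: lookup_sum lookup_single when_def sum.delta in_keys_iff)

lemma fmul_eq_times: "p \<cdot> r = p * r"
proof -
  have "p \<cdot> r = (\<Sum>u\<in>Poly_Mapping.keys p. Poly_Mapping.single u (Poly_Mapping.lookup p u) *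
       (\<Sum>v\<in>Poly_Mapping.keys r. Poly_Mapping.single v (Poly_Mapping.lookup r v)))"
    by (simp add: fmul_def mult_single plus_list_def sum_distrib_left)
  also have "\<dots> = (\<Sum>u\<in>Poly_Mapping.keys p. Poly_Mapping.single u (Poly_Mapping.lookup p u)) *
       (\<Sum>v\<in>Poly_Mapping.keys r. Poly_Mapping.single v (Poly_Mapping.lookup r v))"
    by (simp add: sum_distrib_right)
  finally show ?thesis by (simp add: sum_single_lookup)
qed

lemma fone_eq_one: "fone = 1"
  by (simp add: fone_def cst_def zero_list_def[symmetric])

lemma cst_add: "cst (a + b) = cst a + cst b" by (simp add: cst_def single_add)
lemma cst_mult: "cst (a * b) = cst a * cst b" by (simp add: cst_def mult_single plus_list_def)
lemma cst_diff: "cst (a - b) = cst a - cst b" by (simp add: cst_def single_diff)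
lemma cst_zero: "cst 0 = 0" by (simp add: cst_def)
lemma cst_one: "cst 1 = 1" by (simp add: fone_eq_one[symmetric] fone_def)

lemma cst_commute: "cst c * p = p * (cst c :: ('g, 'k::field) freealg)"
proof -
  have "cst c * Poly_Mapping.single u d = Poly_Mapping.single u d * (cst c :: ('g, 'k) freealg)" for u d
    by (simp add: cst_def mult_single plus_list_def mult.commute)
  then have "cst c * (\<Sum>u\<in>Poly_Mapping.keys p. Poly_Mapping.single u (Poly_Mapping.lookup p u))
     = (\<Sum>u\<in>Poly_Mapping.keys p. Poly_Mapping.single u (Poly_Mapping.lookup p u)) * cst c"
    by (simp add: sum_distrib_left sum_distrib_right)
  then show ?thesis by (simp add: sum_single_lookup)
qed

lemma wordval_Nil: "wordval \<phi> [] = 1" by (simp add: wordval_def fone_eq_one)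
lemma wordval_Cons: "wordval \<phi> (a # w) = \<phi> a * wordval \<phi> w" by (simp add: wordval_def fmul_eq_times)
lemma wordval_append: "wordval \<phi> (u @ v) = wordval \<phi> u * wordval \<phi> v"
  by (induction u) (simp_all add: wordval_Nil wordval_Cons mult.assoc)

lemma subst_eq_sum_superset:
  assumes "finite S" "Poly_Mapping.keys p \<subseteq> S"
  shows "subst \<phi> p = (\<Sum>w\<in>S. cst (Poly_Mapping.lookup p w) * wordval \<phi> w)"
  unfolding subst_def fmul_eq_times
  by (rule sum.mono_neutral_left) (use assms in \<open>auto simp: in_keys_iff cst_zero\<close>)

lemma subst_add: "subst \<phi> (p + r) = subst \<phi> p + subst \<phi> r"
proof -
  let ?S = "Poly_Mapping.keys p \<union> Poly_Mapping.keys r"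
  have "subst \<phi> (p + r) = (\<Sum>w\<in>?S. cst (Poly_Mapping.lookup (p + r) w) * wordval \<phi> w)"
    by (rule subst_eq_sum_superset) (use keys_add[of p r] in auto)
  also have "\<dots> = (\<Sum>w\<in>?S. cst (Poly_Mapping.lookup p w) * wordval \<phi> w)
      + (\<Sum>w\<in>?S. cst (Poly_Mapping.lookup r w) * wordval \<phi> w)"
    by (simp add: lookup_add cst_add distrib_right sum.distrib)
  also have "\<dots> = subst \<phi> p + subst \<phi> r"
    by (simp add: subst_eq_sum_superset[symmetric])
  finally show ?thesis .
qed

lemma subst_zero: "subst \<phi> 0 = 0" by (simp add: subst_def)

lemma subst_uminus: "subst \<phi> (- p) = - subst \<phi> p"
  using subst_add[of \<phi> p "- p"] by (simp add: subst_zero eq_neg_iff_add_eq_0 add.commute)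

lemma subst_diff: "subst \<phi> (p - r) = subst \<phi> p - subst \<phi> r"
  using subst_add[of \<phi> p "- r"] by (simp add: subst_uminus)

lemma subst_single: "subst \<phi> (Poly_Mapping.single w c) = cst c * wordval \<phi> w"
  by (subst subst_eq_sum_superset[of "{w}"]) auto

lemma subst_sum: "subst \<phi> (sum f A) = (\<Sum>a\<in>A. subst \<phi> (f a))"
  by (induction A rule: infinite_finite_induct) (simp_all add: subst_zero subst_add)

lemma subst_mult: "subst \<phi> (p * r) = subst \<phi> p * subst \<phi> r"
proof -
  have cst_left_commute: "x * (cst c * y) = cst c * (x * y)" for x y :: "('h, 'k::field) freealg" and c
    by (metis cst_commute mult.assoc)
  have "subst \<phi> (p * r) = (\<Sum>u\<in>Poly_Mapping.keys p. \<Sum>v\<in>Poly_Mapping.keys r.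
        cst (Poly_Mapping.lookup p u * Poly_Mapping.lookup r v) * wordval \<phi> (u @ v))"
    by (simp add: fmul_eq_times[symmetric] fmul_def subst_sum subst_single)
  also have "\<dots> = (\<Sum>u\<in>Poly_Mapping.keys p. \<Sum>v\<in>Poly_Mapping.keys r.
        (cst (Poly_Mapping.lookup p u) * wordval \<phi> u) * (cst (Poly_Mapping.lookup r v) * wordval \<phi> v))"
    by (simp add: wordval_append cst_mult mult.assoc cst_left_commute[of "wordval \<phi> _"])
  also have "\<dots> = subst \<phi> p * subst \<phi> r"
    by (simp add: subst_def fmul_eq_times sum_product)
  finally show ?thesis .
qed

lemma subst_cst: "subst \<phi> (cst c) = cst c"
  by (simp add: cst_def subst_single wordval_Nil)

lemma subst_one: "subst \<phi> 1 = 1"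
  using subst_cst[of \<phi> 1] by (simp add: cst_one)

lemma subst_gen: "subst \<phi> (gen a) = \<phi> a"
  by (simp add: gen_def subst_single wordval_Cons wordval_Nil cst_one)

lemma wordval_gen: "wordval gen w = Poly_Mapping.single w (1::'k::field)"
proof (induction w)
  case Nil
  show ?case by (simp add: wordval_Nil) (metis single_one zero_list_def)
next
  case (Cons a w)
  then show ?case by (simp add: wordval_Cons gen_def mult_single plus_list_def)
qed

lemma subst_gen_id: "subst gen p = p"
  unfolding subst_def fmul_eq_times wordval_gen
  by (simp add: cst_def mult_single plus_list_def sum_single_lookup)

lemma subst_wordval: "subst \<psi> (wordval \<phi> w) = wordval (\<lambda>g. subst \<psi> (\<phi> g)) w"
  by (induction w) (simp_all add: wordval_Nil wordval_Cons subst_one subst_mult)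

lemma subst_subst: "subst \<psi> (subst \<phi> p) = subst (\<lambda>g. subst \<psi> (\<phi> g)) p"
  by (simp add: subst_def[of \<phi>] fmul_eq_times subst_sum subst_mult subst_cst subst_wordval)
     (simp add: subst_def fmul_eq_times)

lemma ideal_gen_mult: "a \<in> ideal_gen R \<Longrightarrow> u * a * v \<in> ideal_gen R"
  using ideal_gen.mul by (metis fmul_eq_times)

lemma ideal_gen_mult_left: "a \<in> ideal_gen R \<Longrightarrow> u * a \<in> ideal_gen R"
  using ideal_gen_mult[of a R u 1] by simp

lemma ideal_gen_mult_right: "a \<in> ideal_gen R \<Longrightarrow> a * v \<in> ideal_gen R"
  using ideal_gen_mult[of a R 1 v] by simp

lemma ideal_gen_uminus: "a \<in> ideal_gen R \<Longrightarrow> - a \<in> ideal_gen R"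
  using ideal_gen_mult_left[of a R "- 1"] by simp

lemma ideal_gen_sum: "(\<And>x. x \<in> A \<Longrightarrow> f x \<in> ideal_gen R) \<Longrightarrow> sum f A \<in> ideal_gen R"
  by (induction A rule: infinite_finite_induct) (simp_all add: ideal_gen.zero ideal_gen.add)

lemma subst_ideal_gen:
  assumes "\<And>r. r \<in> R \<Longrightarrow> subst \<phi> r \<in> ideal_gen R'" and "p \<in> ideal_gen R"
  shows "subst \<phi> p \<in> ideal_gen R'"
  using assms(2)
proof induction
  case (mul a u v)
  then show ?case by (simp add: fmul_eq_times subst_mult ideal_gen_mult)
qed (use assms(1) in \<open>auto simp: subst_zero subst_add intro: ideal_gen.intros\<close>)

lemma wordval_diff_in_ideal_gen:
  assumes "\<And>g. \<chi> g - \<chi>' g \<in> ideal_gen R"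
  shows "wordval \<chi> w - wordval \<chi>' w \<in> ideal_gen R"
proof (induction w)
  case Nil
  then show ?case by (simp add: wordval_Nil ideal_gen.zero)
next
  case (Cons a w)
  have "wordval \<chi> (a # w) - wordval \<chi>' (a # w)
     = (\<chi> a - \<chi>' a) * wordval \<chi> w + \<chi>' a * (wordval \<chi> w - wordval \<chi>' w)"
    by (simp add: wordval_Cons algebra_simps)
  then show ?case
    using assms Cons by (simp add: ideal_gen.add ideal_gen_mult_left ideal_gen_mult_right)
qed

lemma subst_diff_in_ideal_gen:
  assumes "\<And>g. \<chi> g - \<chi>' g \<in> ideal_gen R"
  shows "subst \<chi> p - subst \<chi>' p \<in> ideal_gen R"
proof -
  have "subst \<chi> p - subst \<chi>' p
      = (\<Sum>w\<in>Poly_Mapping.keys p. cst (Poly_Mapping.lookup p w) * (wordval \<chi> w - wordval \<chi>' w))"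
    by (simp add: subst_def fmul_eq_times algebra_simps sum_subtractf)
  also have "\<dots> \<in> ideal_gen R"
    by (intro ideal_gen_sum ideal_gen_mult_left wordval_diff_in_ideal_gen assms)
  finally show ?thesis .
qed

lemmas subst_simps = fmul_eq_times fone_eq_one subst_add subst_diff subst_mult subst_one subst_cst subst_gen

section \<open>Identities in rings\<close>

definition serre_expr :: "'a::{ring, monoid_mult} \<Rightarrow> 'a \<Rightarrow> 'a \<Rightarrow> 'a" where
  "serre_expr t x z = x*x*x*z - t*x*x*z*x + t*x*z*x*x - z*x*x*x"

(* Lets simp apply a product rule inside the right-nested products that algebra_simps produces. *)
lemma mult_rule_assoc: "(x::'a::semigroup_mult) * y = z \<Longrightarrow> x * (y * w) = z * w"
  by (metis mult.assoc)

lemma commute_inverse: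
  fixes a b c :: "'a::{ring, monoid_mult}"
  assumes "a * b = b * a" "b * c = 1" "c * b = 1"
  shows "a * c = c * a"
proof -
  have "a * c = (c * b) * a * c" using assms(3) by simp
  also have "\<dots> = c * (a * b) * c" using assms(1) by (simp add: mult.assoc)
  also have "\<dots> = c * a" using assms(2) by (simp add: mult.assoc)
  finally show ?thesis .
qed

lemma conj_eq_scalar_mult:
  fixes k k' e l l' :: "'a::{ring, monoid_mult}"
  assumes "k * k' = 1" "k' * k = 1" "k * e * k' = l * e" "\<And>x. l * x = x * l" "l' * l = 1"
  shows "e * k' = l * (k' * e)" and "e * k = l' * (k * e)"
proof -
  have "e * k' = k' * (k * e * k')" using assms(2) by (metis mult.assoc mult_1_left)
  then show "e * k' = l * (k' * e)" using assms(3,4) by (metis mult.assoc)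
  have "e * k = l' * (l * e) * k" using assms(5) by (simp add: mult.assoc[symmetric])
  also have "\<dots> = l' * (k * e * (k' * k))" using assms(3) by (simp add: mult.assoc[symmetric])
  finally show "e * k = l' * (k * e)" using assms(2) by simp
qed

lemma twisted_commute_inverse:
  fixes k k' y a a' b :: "'a::{ring, monoid_mult}"
  assumes kk': "k * k' = 1" and k'k: "k' * k = 1" and yk: "y * k = a * (k * y) + b"
    and a'a: "a' * a = 1" and a'_comm: "\<And>x. a' * x = x * a'" and b_comm: "\<And>x. b * x = x * b"
  shows "y * k' = a' * (k' * y) - a' * (b * (k' * k'))"
proof -
  have "a' * (y * k) = k * y + a' * b"
    using yk a'a by (simp add: distrib_left mult.assoc[symmetric])
  then have ky: "k * y = a' * (y * k) - a' * b"
    by (simp add: eq_diff_eq)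
  have "y * k' = k' * (k * y) * k'" using k'k by (simp add: mult.assoc[symmetric])
  also have "\<dots> = k' * (a' * y) - k' * (a' * (b * k'))"
    using kk' by (simp add: ky algebra_simps mult.assoc)
  also have "\<dots> = a' * (k' * y) - a' * (b * (k' * k'))"
    by (metis a'_comm b_comm mult.assoc)
  finally show ?thesis .
qed

lemma serre_expr_shift:
  fixes a b e f L L' :: "'a::{ring, monoid_mult}"
  assumes "b*a = a*b"
    and "e*a = L*(a*e)" "e*b = L'*(b*e)" "f*a = L'*(a*f)" "f*b = L*(b*f)"
    and "L*L' = 1" "L'*L = 1"
    and "a*L = L*a" "b*L = L*b" "e*L = L*e" "f*L = L*f"
    and "a*L' = L'*a" "b*L' = L'*b" "e*L' = L'*e" "f*L' = L'*f"
  shows "serre_expr (L + 1 + L') (a + e) (b + f) = serre_expr (L + 1 + L') e f"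
  unfolding serre_expr_def
  by (simp add: algebra_simps assms assms[THEN mult_rule_assoc])

lemma serre_expr_scale:
  fixes a b e f L L' c :: "'a::{ring, monoid_mult}"
  assumes "b*a = a*b"
    and "e*a = L*(a*e)" "e*b = L'*(b*e)" "f*a = L'*(a*f)" "f*b = L*(b*f)"
    and "L*L' = 1" "L'*L = 1"
    and "a*L = L*a" "b*L = L*b" "e*L = L*e" "f*L = L*f"
    and "a*L' = L'*a" "b*L' = L'*b" "e*L' = L'*e" "f*L' = L'*f"
    and "a*c = c*a" "b*c = c*b" "e*c = c*e" "f*c = c*f" "L*c = c*L" "L'*c = c*L'"
  shows "serre_expr (L + 1 + L') (c*(a*e)) (c*(b*f))
    = c*(c*(c*(c*(a*(a*(a*(b*serre_expr (L + 1 + L') e f)))))))"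
  unfolding serre_expr_def
  by (simp add: algebra_simps assms assms[THEN mult_rule_assoc])

section \<open>The two presentations in an arbitrary ring\<close>

locale q_scalars =
  fixes Q Qi D :: "'a::{ring, monoid_mult}"
  assumes Q_commute: "Q * x = x * Q"
    and Qi_commute: "Qi * x = x * Qi"
    and D_commute: "D * x = x * D"
    and Q_Qi: "Q * Qi = 1"
    and D_Q_Qi: "D * (Q - Qi) = 1"
begin

definition C :: 'a where "C = Q * (Q - Qi)^2"

definition C_inv :: 'a where "C_inv = Qi * D^2"

lemma Qi_Q: "Qi * Q = 1"
  using Q_Qi Q_commute by metis

lemma Q_Qi_D: "(Q - Qi) * D = 1"
  using D_Q_Qi D_commute by metis

lemma D_Q: "D * Q = 1 + D * Qi"
  using D_Q_Qi by (simp add: algebra_simps)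

lemma Q_Qi_commute: "(Q - Qi) * x = x * (Q - Qi)"
  by (simp add: left_diff_distrib right_diff_distrib Q_commute[of x] Qi_commute[of x])

lemma C_commute: "C * x = x * C"
  unfolding C_def power2_eq_square by (metis Q_commute Q_Qi_commute mult.assoc)

lemma C_inv_commute: "C_inv * x = x * C_inv"
  unfolding C_inv_def power2_eq_square by (metis D_commute Qi_commute mult.assoc)

lemma D_C: "D * C = Q * Q - 1"
proof -
  have "D * C = Q * (D * (Q - Qi)) * (Q - Qi)"
    unfolding C_def power2_eq_square by (metis D_commute mult.assoc)
  also have "\<dots> = Q * (Q - Qi)"
    by (simp only: D_Q_Qi mult_1_right)
  also have "\<dots> = Q * Q - 1"
    by (simp add: right_diff_distrib Q_Qi)
  finally show ?thesis .
qed

lemma C_inv_C: "C_inv * C = 1"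
proof -
  have "C_inv * C = (Qi * Q) * (D * (Q - Qi)) * (D * (Q - Qi))"
    unfolding C_inv_def C_def power2_eq_square
    by (metis D_commute Q_commute mult.assoc)
  then show ?thesis by (simp add: Qi_Q D_Q_Qi)
qed

lemma q_commutator_solve:
  assumes "D * (Q * A - Qi * B) = Z"
  shows "A = Qi * (Qi * B) + Z - Qi * (Qi * Z)" and "B = Q * (Q * A) - Q * (Q * Z) + Z"
proof -
  have "Q * A - Qi * B = (Q - Qi) * Z"
    using arg_cong[OF assms, of "\<lambda>x. (Q - Qi) * x"] by (simp only: mult.assoc[symmetric] Q_Qi_D mult_1_left)
  then have QA: "Q * A = Qi * B + (Q - Qi) * Z"
    by (simp add: algebra_simps)
  have "A = Qi * (Q * A)" by (simp add: mult.assoc[symmetric] Qi_Q)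
  also have "\<dots> = Qi * (Qi * B) + (Qi * Q) * Z - Qi * (Qi * Z)"
    by (simp add: QA algebra_simps)
  finally show "A = Qi * (Qi * B) + Z - Qi * (Qi * Z)"
    by (simp add: Qi_Q)
  have "B = Q * (Qi * B)" by (simp add: mult.assoc[symmetric] Q_Qi)
  also have "\<dots> = Q * (Q * A) - (Q * Q) * Z + (Q * Qi) * Z"
    by (simp add: QA algebra_simps)
  finally show "B = Q * (Q * A) - Q * (Q * Z) + Z"
    by (simp add: Q_Qi mult.assoc)
qed

lemma Q2_Qi2: "Q * Q * (Qi * Qi) = 1" and Qi2_Q2: "Qi * Qi * (Q * Q) = 1"
  by (simp_all add: mult.assoc Q_Qi Qi_Q) (simp_all add: mult.assoc[symmetric] Q_Qi Qi_Q)

lemma Q2_commute: "Q * Q * x = x * (Q * Q)" and Qi2_commute: "Qi * Qi * x = x * (Qi * Qi)"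
  by (metis Q_commute mult.assoc) (metis Qi_commute mult.assoc)

lemma scalars_commute:
  "Q * D = D * Q" "Qi * D = D * Qi" "Q * C = C * Q" "Qi * C = C * Qi" "C * D = D * C"
  "C_inv * D = D * C_inv" "Q * C_inv = C_inv * Q" "Qi * C_inv = C_inv * Qi" "C * C_inv = C_inv * C"
  by (rule D_commute[symmetric] C_commute[symmetric] C_inv_commute[symmetric])+

lemma C_C_inv: "C * C_inv = 1"
  using C_inv_C C_commute by metis

lemma C_inv_Q_Q: "C_inv * (Q * (Q * z)) = D * z + C_inv * z"
proof -
  have "C_inv * (Q * Q) = D * (D * Q) * (Qi * Q)"
    unfolding C_inv_def power2_eq_square by (metis Qi_commute mult.assoc)
  also have "\<dots> = D + C_inv"
    by (simp add: D_Q Qi_Q distrib_left C_inv_def power2_eq_square mult.assoc)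
       (metis Qi_commute mult.assoc)
  finally show ?thesis by (metis distrib_right mult.assoc)
qed

end

(* The maps phi and psi on generators, in any ring; c stands for q (q - q^-1)^2 and c' for its inverse. *)
fun phi_ring :: "'a::{ring, monoid_mult} \<Rightarrow> (gUq \<Rightarrow> 'a) \<Rightarrow> gU \<Rightarrow> 'a" where
  "phi_ring c e (kp i) = e (Kp i)"
| "phi_ring c e (km i) = e (Km i)"
| "phi_ring c e (Y Mi i) = e (Km i) + e (E Mi i)"
| "phi_ring c e (Y Pl i) = e (Km i) - c * e (Km i) * e (E Pl i)"

fun psi_ring :: "'a::{ring, monoid_mult} \<Rightarrow> (gU \<Rightarrow> 'a) \<Rightarrow> gUq \<Rightarrow> 'a" where
  "psi_ring c' u (Kp i) = u (kp i)"
| "psi_ring c' u (Km i) = u (km i)"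
| "psi_ring c' u (E Mi i) = u (Y Mi i) - u (km i)"
| "psi_ring c' u (E Pl i) = c' * (1 - u (kp i) * u (Y Pl i))"

locale U_relations = q_scalars Q Qi D for Q Qi D :: "'a::{ring, monoid_mult}" +
  fixes u :: "gU \<Rightarrow> 'a"
  assumes k_km: "u (kp i) * u (km i) = 1"
    and km_k: "u (km i) * u (kp i) = 1"
    and k0_k1_central: "u (kp I0) * u (kp I1) * u g = u g * u (kp I0) * u (kp I1)"
    and yp_k: "D * (Q * u (Y Pl i) * u (kp i) - Qi * u (kp i) * u (Y Pl i)) = 1"
    and k_ym: "D * (Q * u (kp i) * u (Y Mi i) - Qi * u (Y Mi i) * u (kp i)) = 1"
    and ym_yp: "D * (Q * u (Y Mi i) * u (Y Pl i) - Qi * u (Y Pl i) * u (Y Mi i)) = 1"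
    and yp_ym: "i \<noteq> j \<Longrightarrow>
      D * (Q * u (Y Pl i) * u (Y Mi j) - Qi * u (Y Mi j) * u (Y Pl i)) = u (km I0) * u (km I1)"
    and y_serre: "i \<noteq> j \<Longrightarrow> serre_expr (Q * Q + 1 + Qi * Qi) (u (Y s i)) (u (Y s j)) = 0"

locale Uq_relations = q_scalars Q Qi D for Q Qi D :: "'a::{ring, monoid_mult}" +
  fixes e :: "gUq \<Rightarrow> 'a"
  assumes K_Km: "e (Kp i) * e (Km i) = 1"
    and Km_K: "e (Km i) * e (Kp i) = 1"
    and K0_K1: "e (Kp I0) * e (Kp I1) = e (Kp I1) * e (Kp I0)"
    and K_Ep_Km: "e (Kp i) * e (E Pl i) * e (Km i) = Q * Q * e (E Pl i)"
    and K_Em_Km: "e (Kp i) * e (E Mi i) * e (Km i) = Qi * Qi * e (E Mi i)"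
    and K_Ep_Km_other: "i \<noteq> j \<Longrightarrow> e (Kp i) * e (E Pl j) * e (Km i) = Qi * Qi * e (E Pl j)"
    and K_Em_Km_other: "i \<noteq> j \<Longrightarrow> e (Kp i) * e (E Mi j) * e (Km i) = Q * Q * e (E Mi j)"
    and Ep_Em: "e (E Pl i) * e (E Mi i) - e (E Mi i) * e (E Pl i) = D * (e (Kp i) - e (Km i))"
    and E_cross: "e (E s I0) * e (E (flip s) I1) = e (E (flip s) I1) * e (E s I0)"
    and E_serre: "i \<noteq> j \<Longrightarrow> serre_expr (Q * Q + 1 + Qi * Qi) (e (E s i)) (e (E s j)) = 0"
begin

lemma K_commute:
  "e (Kp I1) * e (Kp I0) = e (Kp I0) * e (Kp I1)" "e (Kp I1) * e (Km I0) = e (Km I0) * e (Kp I1)"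
  "e (Km I1) * e (Kp I0) = e (Kp I0) * e (Km I1)" "e (Km I1) * e (Km I0) = e (Km I0) * e (Km I1)"
proof -
  show 1: "e (Kp I1) * e (Km I0) = e (Km I0) * e (Kp I1)"
    by (rule commute_inverse[OF K0_K1[symmetric] K_Km Km_K])
  show "e (Km I1) * e (Kp I0) = e (Kp I0) * e (Km I1)"
    by (rule commute_inverse[OF K0_K1 K_Km Km_K, symmetric])
  show "e (Km I1) * e (Km I0) = e (Km I0) * e (Km I1)"
    by (rule commute_inverse[OF 1[symmetric] K_Km Km_K, symmetric])
qed (rule K0_K1[symmetric])

lemma E_K:
  "e (E Pl i) * e (Km i) = Q * (Q * (e (Km i) * e (E Pl i)))"
  "e (E Pl i) * e (Kp i) = Qi * (Qi * (e (Kp i) * e (E Pl i)))"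
  "e (E Mi i) * e (Km i) = Qi * (Qi * (e (Km i) * e (E Mi i)))"
  "e (E Mi i) * e (Kp i) = Q * (Q * (e (Kp i) * e (E Mi i)))"
  using conj_eq_scalar_mult[OF K_Km Km_K K_Ep_Km Q2_commute Qi2_Q2]
    conj_eq_scalar_mult[OF K_Km Km_K K_Em_Km Qi2_commute Q2_Qi2]
  by (simp_all add: mult.assoc)

lemma E_K_other:
  assumes "i \<noteq> j"
  shows "e (E Pl j) * e (Km i) = Qi * (Qi * (e (Km i) * e (E Pl j)))"
    "e (E Pl j) * e (Kp i) = Q * (Q * (e (Kp i) * e (E Pl j)))"
    "e (E Mi j) * e (Km i) = Q * (Q * (e (Km i) * e (E Mi j)))"
    "e (E Mi j) * e (Kp i) = Qi * (Qi * (e (Kp i) * e (E Mi j)))"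
  using conj_eq_scalar_mult[OF K_Km Km_K K_Ep_Km_other[OF assms] Qi2_commute Q2_Qi2]
    conj_eq_scalar_mult[OF K_Km Km_K K_Em_Km_other[OF assms] Q2_commute Qi2_Q2]
  by (simp_all add: mult.assoc)

lemma generators_scalars_commute:
  "e g * Q = Q * e g" "e g * Qi = Qi * e g" "e g * D = D * e g" "e g * C = C * e g"
  by (rule Q_commute[symmetric] Qi_commute[symmetric] D_commute[symmetric] C_commute[symmetric])+

lemma Ep_Em_swap: "e (E Pl i) * e (E Mi i) = e (E Mi i) * e (E Pl i) + D * e (Kp i) - D * e (Km i)"
  using Ep_Em[of i] by (simp add: algebra_simps)

lemma E_cross_swap:
  "e (E Pl I0) * e (E Mi I1) = e (E Mi I1) * e (E Pl I0)"
  "e (E Pl I1) * e (E Mi I0) = e (E Mi I0) * e (E Pl I1)"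
  using E_cross[of Pl] E_cross[of Mi] by simp_all

(* Oriented to move scalars to the front, K-factors to the left, index I0 before I1 and e^- before e^+. *)
lemmas swap_rules = K_Km Km_K K_commute E_K E_K_other generators_scalars_commute scalars_commute
  Q_Qi Qi_Q D_Q D_C Ep_Em_swap E_cross_swap
lemmas swap_simps = swap_rules swap_rules[THEN mult_rule_assoc]

lemma U_relations_phi: "U_relations Q Qi D (phi_ring C e)"
proof unfold_locales
  fix i j :: ix and g :: gU and s :: sg
  let ?u = "phi_ring C e"
  show "?u (kp i) * ?u (km i) = 1" "?u (km i) * ?u (kp i) = 1"
    by (simp_all add: K_Km Km_K)
  have "?u (kp I0) * ?u (kp I1) * ?u (Y s' m) = ?u (Y s' m) * ?u (kp I0) * ?u (kp I1)"
    "?u (kp I0) * ?u (kp I1) * ?u (kp m) = ?u (kp m) * ?u (kp I0) * ?u (kp I1)"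
    "?u (kp I0) * ?u (kp I1) * ?u (km m) = ?u (km m) * ?u (kp I0) * ?u (kp I1)" for s' m
    by (cases s'; cases m; simp add: algebra_simps swap_simps)+
  then show "?u (kp I0) * ?u (kp I1) * ?u g = ?u g * ?u (kp I0) * ?u (kp I1)"
    by (cases g) simp_all
  show "D * (Q * ?u (Y Pl i) * ?u (kp i) - Qi * ?u (kp i) * ?u (Y Pl i)) = 1"
    by (simp add: algebra_simps swap_simps)
  show "D * (Q * ?u (kp i) * ?u (Y Mi i) - Qi * ?u (Y Mi i) * ?u (kp i)) = 1"
    by (simp add: algebra_simps swap_simps)
  show "D * (Q * ?u (Y Mi i) * ?u (Y Pl i) - Qi * ?u (Y Pl i) * ?u (Y Mi i)) = 1"
    by (simp add: algebra_simps swap_simps)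
  show "D * (Q * ?u (Y Pl i) * ?u (Y Mi j) - Qi * ?u (Y Mi j) * ?u (Y Pl i)) = ?u (km I0) * ?u (km I1)"
    if "i \<noteq> j"
    using that by (cases i; cases j) (simp_all add: algebra_simps swap_simps)
  show "serre_expr (Q * Q + 1 + Qi * Qi) (?u (Y s i)) (?u (Y s j)) = 0" if "i \<noteq> j"
  proof (cases s)
    case Pl
    let ?T = "Q * Q + 1 + Qi * Qi"
    have "serre_expr ?T (?u (Y Pl i)) (?u (Y Pl j))
        = serre_expr ?T (e (Km i) + (- C) * (e (Km i) * e (E Pl i)))
            (e (Km j) + (- C) * (e (Km j) * e (E Pl j)))"
      by (simp add: mult.assoc)
    also have "\<dots> = serre_expr ?T ((- C) * (e (Km i) * e (E Pl i))) ((- C) * (e (Km j) * e (E Pl j)))"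
      using that by (intro serre_expr_shift; cases i; cases j; simp add: swap_simps mult.assoc)
    also have "\<dots> = (- C) * ((- C) * ((- C) * ((- C) * (e (Km i) * (e (Km i) * (e (Km i) *
        (e (Km j) * serre_expr ?T (e (E Pl i)) (e (E Pl j)))))))))"
      using that by (intro serre_expr_scale; cases i; cases j; simp add: swap_simps mult.assoc)
    also have "\<dots> = 0"
      using E_serre[OF that, of Pl] by simp
    finally show ?thesis using Pl by simp
  next
    case Mi
    have "serre_expr (Q * Q + 1 + Qi * Qi) (?u (Y Mi i)) (?u (Y Mi j))
        = serre_expr (Qi * Qi + 1 + Q * Q) (e (Km i) + e (E Mi i)) (e (Km j) + e (E Mi j))"
      by (simp add: add_ac)
    also have "\<dots> = serre_expr (Qi * Qi + 1 + Q * Q) (e (E Mi i)) (e (E Mi j))"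
      using that by (intro serre_expr_shift; cases i; cases j; simp add: swap_simps mult.assoc)
    also have "\<dots> = 0"
      using E_serre[OF that, of Mi] by (simp add: add_ac)
    finally show ?thesis using Mi by simp
  qed
qed

lemma psi_phi: "psi_ring C_inv (phi_ring C e) g = e g"
proof (cases g)
  case (E s i)
  have "psi_ring C_inv (phi_ring C e) (E Pl i) = (C_inv * C) * e (E Pl i)"
    by (simp add: algebra_simps swap_simps)
  then show ?thesis using E by (cases s) (simp_all add: C_inv_C)
qed simp_all

end

context U_relations
begin

lemma k_commute:
  "u (kp I1) * u (kp I0) = u (kp I0) * u (kp I1)" "u (kp I1) * u (km I0) = u (km I0) * u (kp I1)"
  "u (km I1) * u (kp I0) = u (kp I0) * u (km I1)" "u (km I1) * u (km I0) = u (km I0) * u (km I1)"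
proof -
  show k10: "u (kp I1) * u (kp I0) = u (kp I0) * u (kp I1)"
    using arg_cong[OF k0_k1_central[of "kp I0"], of "\<lambda>x. u (km I0) * x"]
    by (simp add: mult.assoc[symmetric] km_k)
  show 1: "u (kp I1) * u (km I0) = u (km I0) * u (kp I1)"
    by (rule commute_inverse[OF k10 k_km km_k])
  show "u (km I1) * u (kp I0) = u (kp I0) * u (km I1)"
    by (rule commute_inverse[OF k10[symmetric] k_km km_k, symmetric])
  show "u (km I1) * u (km I0) = u (km I0) * u (km I1)"
    by (rule commute_inverse[OF 1[symmetric] k_km km_k, symmetric])
qed

lemma k_pair_central:
  assumes "i \<noteq> j"
  shows "u (kp i) * u (kp j) * u g = u g * (u (kp i) * u (kp j))"
  using assms k0_k1_central[of g] k_commute(1) by (cases i; cases j) (simp_all add: mult.assoc)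

lemma km_pair_central:
  assumes "i \<noteq> j"
  shows "u (km i) * u (km j) * u g = u g * (u (km i) * u (km j))"
proof (rule commute_inverse[symmetric])
  show "u g * (u (kp j) * u (kp i)) = u (kp j) * u (kp i) * u g"
    using k_pair_central[of j i g] assms by simp
  show "u (kp j) * u (kp i) * (u (km i) * u (km j)) = 1"
    by (simp add: mult.assoc) (simp add: mult.assoc[symmetric] k_km)
  show "u (km i) * u (km j) * (u (kp j) * u (kp i)) = 1"
    by (simp add: mult.assoc) (simp add: mult.assoc[symmetric] km_k)
qed

lemma y_k_other:
  assumes "i \<noteq> j"
  shows "u (Y s j) * u (kp i) = u (kp i) * (u (kp j) * (u (Y s j) * u (km j)))"
    "u (Y s j) * u (km i) = u (km i) * (u (km j) * (u (Y s j) * u (kp j)))"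
proof -
  have "u (Y s j) * u (kp i) = u (Y s j) * (u (kp i) * u (kp j)) * u (km j)"
    by (simp add: mult.assoc k_km)
  also have "\<dots> = u (kp i) * u (kp j) * u (Y s j) * u (km j)"
    by (simp only: k_pair_central[OF assms])
  finally show "u (Y s j) * u (kp i) = u (kp i) * (u (kp j) * (u (Y s j) * u (km j)))"
    by (simp add: mult.assoc)
  have "u (Y s j) * u (km i) = u (Y s j) * (u (km i) * u (km j)) * u (kp j)"
    by (simp add: mult.assoc km_k)
  also have "\<dots> = u (km i) * u (km j) * u (Y s j) * u (kp j)"
    by (simp only: km_pair_central[OF assms])
  finally show "u (Y s j) * u (km i) = u (km i) * (u (km j) * (u (Y s j) * u (kp j)))"
    by (simp add: mult.assoc)
qed

lemma y_k:
  "u (Y Pl i) * u (kp i) = Qi * (Qi * (u (kp i) * u (Y Pl i))) + (1 - Qi * Qi)"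
  "u (Y Mi i) * u (kp i) = Q * (Q * (u (kp i) * u (Y Mi i))) + (1 - Q * Q)"
  using q_commutator_solve(1)[of "u (Y Pl i) * u (kp i)" "u (kp i) * u (Y Pl i)" 1]
    q_commutator_solve(2)[of "u (kp i) * u (Y Mi i)" "u (Y Mi i) * u (kp i)" 1] yp_k k_ym
  by (simp_all add: mult.assoc)

lemma ym_yp_swap: "u (Y Mi i) * u (Y Pl i) = Qi * (Qi * (u (Y Pl i) * u (Y Mi i))) + 1 - Qi * Qi"
  using q_commutator_solve(1)[of "u (Y Mi i) * u (Y Pl i)" "u (Y Pl i) * u (Y Mi i)" 1] ym_yp
  by (simp add: mult.assoc)

lemma yp_ym_swap:
  assumes "i \<noteq> j"
  shows "u (Y Pl i) * u (Y Mi j) = Qi * (Qi * (u (Y Mi j) * u (Y Pl i)))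
    + u (km I0) * u (km I1) - Qi * (Qi * (u (km I0) * u (km I1)))"
  using q_commutator_solve(1)[of "u (Y Pl i) * u (Y Mi j)" "u (Y Mi j) * u (Y Pl i)"] yp_ym[OF assms]
  by (simp add: mult.assoc)

lemma y_km:
  "u (Y Pl i) * u (km i) = Q * Q * (u (km i) * u (Y Pl i)) - Q * Q * ((1 - Qi * Qi) * (u (km i) * u (km i)))"
  "u (Y Mi i) * u (km i) = Qi * Qi * (u (km i) * u (Y Mi i)) - Qi * Qi * ((1 - Q * Q) * (u (km i) * u (km i)))"
proof -
  have Qi2_c: "(1 - Qi * Qi) * x = x * (1 - Qi * Qi)" and Q2_c: "(1 - Q * Q) * x = x * (1 - Q * Q)" for x
    by (simp_all add: left_diff_distrib right_diff_distrib Q2_commute Qi2_commute)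
  show "u (Y Pl i) * u (km i) = Q * Q * (u (km i) * u (Y Pl i)) - Q * Q * ((1 - Qi * Qi) * (u (km i) * u (km i)))"
    by (rule twisted_commute_inverse[OF k_km km_k _ Q2_Qi2 Q2_commute Qi2_c]) (simp add: y_k mult.assoc)
  show "u (Y Mi i) * u (km i) = Qi * Qi * (u (km i) * u (Y Mi i)) - Qi * Qi * ((1 - Q * Q) * (u (km i) * u (km i)))"
    by (rule twisted_commute_inverse[OF k_km km_k _ Qi2_Q2 Qi2_commute Q2_c]) (simp add: y_k mult.assoc)
qed

lemma generators_scalars_commute:
  "u g * Q = Q * u g" "u g * Qi = Qi * u g" "u g * D = D * u g" "u g * C = C * u g"
  "u g * C_inv = C_inv * u g"
  by (rule Q_commute[symmetric] Qi_commute[symmetric] D_commute[symmetric] C_commute[symmetric]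
      C_inv_commute[symmetric])+

(* Oriented to move scalars to the front and k-factors to the left of y-factors. *)
lemmas swap_rules = k_km km_k k_commute y_k_other y_k y_km generators_scalars_commute scalars_commute
  Q_Qi Qi_Q D_Q C_inv_C C_C_inv
lemmas swap_simps = swap_rules swap_rules[THEN mult_rule_assoc] C_inv_Q_Q

lemma Uq_relations_psi: "Uq_relations Q Qi D (psi_ring C_inv u)"
proof unfold_locales
  fix i j :: ix and s :: sg
  let ?e = "psi_ring C_inv u"
  show "?e (Kp i) * ?e (Km i) = 1" "?e (Km i) * ?e (Kp i) = 1"
    by (simp_all add: k_km km_k)
  show "?e (Kp I0) * ?e (Kp I1) = ?e (Kp I1) * ?e (Kp I0)"
    by (simp add: k_commute)
  show "?e (Kp i) * ?e (E Pl i) * ?e (Km i) = Q * Q * ?e (E Pl i)"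
    "?e (Kp i) * ?e (E Mi i) * ?e (Km i) = Qi * Qi * ?e (E Mi i)"
    by (simp_all add: algebra_simps swap_simps)
  show "?e (Kp i) * ?e (E Pl j) * ?e (Km i) = Qi * Qi * ?e (E Pl j)"
    "?e (Kp i) * ?e (E Mi j) * ?e (Km i) = Q * Q * ?e (E Mi j)" if "i \<noteq> j"
    using that by (cases i; cases j; simp add: algebra_simps swap_simps)+
  show "?e (E Pl i) * ?e (E Mi i) - ?e (E Mi i) * ?e (E Pl i) = D * (?e (Kp i) - ?e (Km i))"
    by (simp add: algebra_simps swap_simps ym_yp_swap ym_yp_swap[THEN mult_rule_assoc])
  show "?e (E s I0) * ?e (E (flip s) I1) = ?e (E (flip s) I1) * ?e (E s I0)"
    by (cases s) (simp_all add: algebra_simps swap_simps yp_ym_swap yp_ym_swap[THEN mult_rule_assoc])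
  show "serre_expr (Q * Q + 1 + Qi * Qi) (?e (E s i)) (?e (E s j)) = 0" if "i \<noteq> j"
  proof (cases s)
    case Pl
    let ?T = "Q * Q + 1 + Qi * Qi"
    let ?S = "serre_expr ?T (?e (E Pl i)) (?e (E Pl j))"
    have yp: "u (Y Pl m) = u (km m) + (- C) * (u (km m) * ?e (E Pl m))" for m
      by (simp add: algebra_simps swap_simps)
    have "0 = serre_expr ?T (u (Y Pl i)) (u (Y Pl j))"
      using y_serre[OF that] by simp
    also have "\<dots> = serre_expr ?T ((- C) * (u (km i) * ?e (E Pl i))) ((- C) * (u (km j) * ?e (E Pl j)))"
      unfolding yp using that by (intro serre_expr_shift; cases i; cases j; simp add: algebra_simps swap_simps)
    also have "\<dots> = (- C) * ((- C) * ((- C) * ((- C) * (u (km i) * (u (km i) * (u (km i) *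
        (u (km j) * ?S)))))))"
      using that by (intro serre_expr_scale; cases i; cases j; simp add: algebra_simps swap_simps)
    finally have "u (kp j) * (u (kp i) * (u (kp i) * (u (kp i) * (C_inv * (C_inv * (C_inv * (C_inv *
        ((- C) * ((- C) * ((- C) * ((- C) * (u (km i) * (u (km i) * (u (km i) * (u (km j) * ?S))))))))))))))) = 0"
      by simp
    moreover have "u (kp j) * (u (kp i) * (u (kp i) * (u (kp i) * (C_inv * (C_inv * (C_inv * (C_inv *
        ((- C) * ((- C) * ((- C) * ((- C) * (u (km i) * (u (km i) * (u (km i) * (u (km j) * ?S))))))))))))))) = ?S"
      using that by (cases i; cases j; simp add: swap_simps mult.assoc)
    ultimately show ?thesis using Pl by simp
  next
    case Mi
    have "0 = serre_expr (Qi * Qi + 1 + Q * Q) (u (km i) + ?e (E Mi i)) (u (km j) + ?e (E Mi j))"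
      using y_serre[OF that, of Mi] by (simp add: add_ac)
    also have "\<dots> = serre_expr (Qi * Qi + 1 + Q * Q) (?e (E Mi i)) (?e (E Mi j))"
      using that by (intro serre_expr_shift; cases i; cases j; simp add: algebra_simps swap_simps)
    finally show ?thesis using Mi by (simp add: add_ac)
  qed
qed

lemma phi_psi: "phi_ring C (psi_ring C_inv u) g = u g"
proof (cases g)
  case (Y s i)
  have "phi_ring C (psi_ring C_inv u) (Y Pl i) = u (km i) * u (kp i) * u (Y Pl i)"
    by (simp add: algebra_simps swap_simps)
  then show ?thesis using Y by (cases s) (simp_all add: km_k)
qed simp_all

end

section \<open>Algebras of families over q\<close>

definition admissible :: "'k::field \<Rightarrow> bool" where
  "admissible q \<longleftrightarrow> q \<noteq> 0 \<and> q - inverse q \<noteq> 0"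

lemma admissibleI:
  assumes "(q::'k::field) \<noteq> 0" and "\<forall>n>0. q ^ n \<noteq> 1"
  shows "admissible q"
proof -
  have "q * (q - inverse q) = q ^ 2 - 1"
    using assms(1) by (simp add: power2_eq_square right_diff_distrib)
  then have "q - inverse q \<noteq> 0"
    using assms(2) by (metis mult_zero_right right_minus_eq zero_less_numeral)
  then show ?thesis using assms(1) by (simp add: admissible_def)
qed

(* No type can depend on the value q, so the algebras are modelled by families of elements indexed by q,
   identified when they agree modulo the relations at every admissible q. *)
definition family_eq ::
  "('k::field \<Rightarrow> ('g, 'k) freealg set) \<Rightarrow> ('k \<Rightarrow> ('g, 'k) freealg) \<Rightarrow> ('k \<Rightarrow> ('g, 'k) freealg) \<Rightarrow> bool"
  where "family_eq R F G \<longleftrightarrow> (\<forall>q. admissible q \<longrightarrow> F q - G q \<in> ideal_gen (R q))"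

lemma family_eq_refl: "family_eq R F F"
  by (simp add: family_eq_def ideal_gen.zero)

lemma equivp_family_eq: "equivp (family_eq R)"
proof (rule equivpI)
  show "reflp (family_eq R)" by (simp add: reflp_def family_eq_refl)
  show "symp (family_eq R)"
    unfolding symp_def family_eq_def by (metis ideal_gen_uminus minus_diff_eq)
  show "transp (family_eq R)"
  proof (rule transpI)
    fix F G H assume "family_eq R F G" "family_eq R G H"
    moreover have "F q - H q = (F q - G q) + (G q - H q)" for q by simp
    ultimately show "family_eq R F H"
      unfolding family_eq_def by (metis ideal_gen.add)
  qed
qed

lemma family_eq_add:
  "family_eq R F F' \<Longrightarrow> family_eq R G G' \<Longrightarrow> family_eq R (\<lambda>q. F q + G q) (\<lambda>q. F' q + G' q)"
  unfolding family_eq_def by (metis ideal_gen.add add_diff_add)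

lemma family_eq_uminus: "family_eq R F F' \<Longrightarrow> family_eq R (\<lambda>q. - F q) (\<lambda>q. - F' q)"
  unfolding family_eq_def by (metis ideal_gen_uminus minus_diff_minus)

lemma family_eq_diff:
  "family_eq R F F' \<Longrightarrow> family_eq R G G' \<Longrightarrow> family_eq R (\<lambda>q. F q - G q) (\<lambda>q. F' q - G' q)"
  using family_eq_add[of R F F' "\<lambda>q. - G q" "\<lambda>q. - G' q"] family_eq_uminus[of R G G'] by simp

lemma family_eq_mult:
  "family_eq R F F' \<Longrightarrow> family_eq R G G' \<Longrightarrow> family_eq R (\<lambda>q. F q * G q) (\<lambda>q. F' q * G' q)"
  unfolding family_eq_def
proof (intro allI impI)
  fix q :: 'a
  assume "\<forall>q. admissible q \<longrightarrow> F q - F' q \<in> ideal_gen (R q)"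
    and "\<forall>q. admissible q \<longrightarrow> G q - G' q \<in> ideal_gen (R q)" and "admissible q"
  moreover have "F q * G q - F' q * G' q = (F q - F' q) * G q + F' q * (G q - G' q)"
    by (simp add: algebra_simps)
  ultimately show "F q * G q - F' q * G' q \<in> ideal_gen (R q)"
    by (simp add: ideal_gen.add ideal_gen_mult_left ideal_gen_mult_right)
qed

(* sc c is the central element given by the scalar family q -> c q. *)
locale scalar_family =
  fixes sc :: "('k::field \<Rightarrow> 'k) \<Rightarrow> 'a::{ring, monoid_mult}"
  assumes sc_add: "sc (\<lambda>q. c q + d q) = sc c + sc d"
    and sc_diff: "sc (\<lambda>q. c q - d q) = sc c - sc d"
    and sc_mult: "sc (\<lambda>q. c q * d q) = sc c * sc d"
    and sc_one: "sc (\<lambda>q. 1) = 1"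
    and sc_commute: "sc c * x = x * sc c"
    and sc_cong: "(\<And>q. admissible q \<Longrightarrow> c q = d q) \<Longrightarrow> sc c = sc d"

sublocale scalar_family \<subseteq> q_scalars "sc (\<lambda>q. q)" "sc inverse" "sc (\<lambda>q. 1 / (q - inverse q))"
proof unfold_locales
  have "sc (\<lambda>q. q * inverse q) = sc (\<lambda>q. 1)"
    by (rule sc_cong) (simp add: admissible_def)
  then show "sc (\<lambda>q. q) * sc inverse = 1"
    by (simp only: sc_mult sc_one)
  have "sc (\<lambda>q. 1 / (q - inverse q) * (q - inverse q)) = sc (\<lambda>q. 1)"
    by (rule sc_cong) (simp add: admissible_def)
  then show "sc (\<lambda>q. 1 / (q - inverse q)) * (sc (\<lambda>q. q) - sc inverse) = 1"
    by (simp only: sc_mult sc_diff sc_one)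
qed (rule sc_commute)+

context scalar_family
begin

lemma sc_C: "sc (\<lambda>q. q * (q - inverse q)^2) = C"
  by (simp add: C_def power2_eq_square sc_mult sc_diff)

lemma sc_C_inv: "sc (\<lambda>q. 1 / (q * (q - inverse q)^2)) = C_inv"
proof -
  have "sc (\<lambda>q. 1 / (q * (q - inverse q)^2))
      = sc (\<lambda>q. inverse q * (1 / (q - inverse q) * (1 / (q - inverse q))))"
    by (rule sc_cong) (simp add: power2_eq_square divide_inverse inverse_mult_distrib)
  then show ?thesis by (simp only: C_inv_def power2_eq_square sc_mult)
qed

lemma sc_qint3: "sc (\<lambda>q. qint q 3) = sc (\<lambda>q. q) * sc (\<lambda>q. q) + 1 + sc inverse * sc inverse"
proof -
  have "sc (\<lambda>q. qint q 3) = sc (\<lambda>q. q * q + 1 + inverse q * inverse q)"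
  proof (rule sc_cong)
    fix q :: 'k
    assume "admissible q"
    then have "q * inverse q = 1" "q - inverse q \<noteq> 0" by (auto simp: admissible_def)
    moreover from this(1) have "(q * q + 1 + inverse q * inverse q) * (q - inverse q) = q ^ 3 - inverse q ^ 3"
      by algebra
    ultimately show "qint q 3 = q * q + 1 + inverse q * inverse q"
      unfolding qint_def by (metis nonzero_mult_div_cancel_right)
  qed
  then show ?thesis by (simp add: sc_add sc_mult sc_one)
qed

lemma sc_power2: "sc (\<lambda>q. q ^ 2) = sc (\<lambda>q. q) * sc (\<lambda>q. q)" "sc (\<lambda>q. inverse q ^ 2) = sc inverse * sc inverse"
  by (simp_all add: power2_eq_square sc_mult[symmetric])

end

quotient_type (overloaded) 'k Uq_fam = "'k::field \<Rightarrow> (gUq, 'k) freealg" / "family_eq relUq"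
  by (rule equivp_family_eq)

instantiation Uq_fam :: (field) "{ring, monoid_mult}"
begin
lift_definition zero_Uq_fam :: "'a Uq_fam" is "\<lambda>q. 0" .
lift_definition one_Uq_fam :: "'a Uq_fam" is "\<lambda>q. 1" .
lift_definition plus_Uq_fam :: "'a Uq_fam \<Rightarrow> 'a Uq_fam \<Rightarrow> 'a Uq_fam" is "\<lambda>F G q. F q + G q"
  by (rule family_eq_add)
lift_definition uminus_Uq_fam :: "'a Uq_fam \<Rightarrow> 'a Uq_fam" is "\<lambda>F q. - F q"
  by (rule family_eq_uminus)
lift_definition minus_Uq_fam :: "'a Uq_fam \<Rightarrow> 'a Uq_fam \<Rightarrow> 'a Uq_fam" is "\<lambda>F G q. F q - G q"
  by (rule family_eq_diff)
lift_definition times_Uq_fam :: "'a Uq_fam \<Rightarrow> 'a Uq_fam \<Rightarrow> 'a Uq_fam" is "\<lambda>F G q. F q * G q"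
  by (rule family_eq_mult)
instance
  by standard (transfer; simp add: family_eq_refl algebra_simps)+
end

definition Uq_scalar :: "('k::field \<Rightarrow> 'k) \<Rightarrow> 'k Uq_fam" where
  "Uq_scalar c = abs_Uq_fam (\<lambda>q. cst (c q))"

definition Uq_gen :: "gUq \<Rightarrow> 'k::field Uq_fam" where
  "Uq_gen g = abs_Uq_fam (\<lambda>q. gen g)"

lemma abs_Uq_fam_simps:
  "abs_Uq_fam (\<lambda>q. F q + G q) = abs_Uq_fam F + abs_Uq_fam G"
  "abs_Uq_fam (\<lambda>q. F q - G q) = abs_Uq_fam F - abs_Uq_fam G"
  "abs_Uq_fam (\<lambda>q. F q * G q) = abs_Uq_fam F * abs_Uq_fam G"
  "abs_Uq_fam (\<lambda>q. F q \<cdot> G q) = abs_Uq_fam F * abs_Uq_fam G"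
  "abs_Uq_fam (\<lambda>q. 1) = 1" "abs_Uq_fam (\<lambda>q. fone) = 1"
  "abs_Uq_fam (\<lambda>q. cst (c q)) = Uq_scalar c" "abs_Uq_fam (\<lambda>q. gen g) = Uq_gen g"
  by (simp_all add: plus_Uq_fam.abs_eq minus_Uq_fam.abs_eq times_Uq_fam.abs_eq one_Uq_fam.abs_eq
      fmul_eq_times fone_eq_one Uq_scalar_def Uq_gen_def)

interpretation Uq_fam: scalar_family Uq_scalar
proof unfold_locales
  fix c d :: "'k::field \<Rightarrow> 'k" and x :: "'k Uq_fam"
  show "Uq_scalar (\<lambda>q. c q + d q) = Uq_scalar c + Uq_scalar d"
    "Uq_scalar (\<lambda>q. c q - d q) = Uq_scalar c - Uq_scalar d"
    "Uq_scalar (\<lambda>q. c q * d q) = Uq_scalar c * Uq_scalar d"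
    "Uq_scalar (\<lambda>q. 1) = (1 :: 'k Uq_fam)"
    by (simp_all add: Uq_scalar_def cst_add cst_diff cst_mult cst_one abs_Uq_fam_simps(1-3,5))
  show "Uq_scalar c * x = x * Uq_scalar c"
    unfolding Uq_scalar_def by transfer (simp add: cst_commute family_eq_refl)
  show "Uq_scalar c = Uq_scalar d" if "\<And>q. admissible q \<Longrightarrow> c q = d q"
    unfolding Uq_scalar_def Uq_fam.abs_eq_iff family_eq_def using that by (simp add: ideal_gen.zero)
qed

lemma abs_Uq_fam_relator: "(\<And>q. F q \<in> relUq q) \<Longrightarrow> abs_Uq_fam F = 0"
  unfolding zero_Uq_fam_def Uq_fam.abs_eq_iff family_eq_def by (simp add: ideal_gen.base)

lemma abs_Uq_fam_eq_0D: "abs_Uq_fam F = 0 \<Longrightarrow> admissible q \<Longrightarrow> F q \<in> ideal_gen (relUq q)"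
  unfolding zero_Uq_fam_def Uq_fam.abs_eq_iff family_eq_def by simp

quotient_type (overloaded) 'k U_fam = "'k::field \<Rightarrow> (gU, 'k) freealg" / "family_eq relU"
  by (rule equivp_family_eq)

instantiation U_fam :: (field) "{ring, monoid_mult}"
begin
lift_definition zero_U_fam :: "'a U_fam" is "\<lambda>q. 0" .
lift_definition one_U_fam :: "'a U_fam" is "\<lambda>q. 1" .
lift_definition plus_U_fam :: "'a U_fam \<Rightarrow> 'a U_fam \<Rightarrow> 'a U_fam" is "\<lambda>F G q. F q + G q"
  by (rule family_eq_add)
lift_definition uminus_U_fam :: "'a U_fam \<Rightarrow> 'a U_fam" is "\<lambda>F q. - F q"
  by (rule family_eq_uminus)
lift_definition minus_U_fam :: "'a U_fam \<Rightarrow> 'a U_fam \<Rightarrow> 'a U_fam" is "\<lambda>F G q. F q - G q"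
  by (rule family_eq_diff)
lift_definition times_U_fam :: "'a U_fam \<Rightarrow> 'a U_fam \<Rightarrow> 'a U_fam" is "\<lambda>F G q. F q * G q"
  by (rule family_eq_mult)
instance
  by standard (transfer; simp add: family_eq_refl algebra_simps)+
end

definition U_scalar :: "('k::field \<Rightarrow> 'k) \<Rightarrow> 'k U_fam" where
  "U_scalar c = abs_U_fam (\<lambda>q. cst (c q))"

definition U_gen :: "gU \<Rightarrow> 'k::field U_fam" where
  "U_gen g = abs_U_fam (\<lambda>q. gen g)"

lemma abs_U_fam_simps:
  "abs_U_fam (\<lambda>q. F q + G q) = abs_U_fam F + abs_U_fam G"
  "abs_U_fam (\<lambda>q. F q - G q) = abs_U_fam F - abs_U_fam G"
  "abs_U_fam (\<lambda>q. F q * G q) = abs_U_fam F * abs_U_fam G"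
  "abs_U_fam (\<lambda>q. F q \<cdot> G q) = abs_U_fam F * abs_U_fam G"
  "abs_U_fam (\<lambda>q. 1) = 1" "abs_U_fam (\<lambda>q. fone) = 1"
  "abs_U_fam (\<lambda>q. cst (c q)) = U_scalar c" "abs_U_fam (\<lambda>q. gen g) = U_gen g"
  by (simp_all add: plus_U_fam.abs_eq minus_U_fam.abs_eq times_U_fam.abs_eq one_U_fam.abs_eq
      fmul_eq_times fone_eq_one U_scalar_def U_gen_def)

interpretation U_fam: scalar_family U_scalar
proof unfold_locales
  fix c d :: "'k::field \<Rightarrow> 'k" and x :: "'k U_fam"
  show "U_scalar (\<lambda>q. c q + d q) = U_scalar c + U_scalar d"
    "U_scalar (\<lambda>q. c q - d q) = U_scalar c - U_scalar d"
    "U_scalar (\<lambda>q. c q * d q) = U_scalar c * U_scalar d"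
    "U_scalar (\<lambda>q. 1) = (1 :: 'k U_fam)"
    by (simp_all add: U_scalar_def cst_add cst_diff cst_mult cst_one abs_U_fam_simps(1-3,5))
  show "U_scalar c * x = x * U_scalar c"
    unfolding U_scalar_def by transfer (simp add: cst_commute family_eq_refl)
  show "U_scalar c = U_scalar d" if "\<And>q. admissible q \<Longrightarrow> c q = d q"
    unfolding U_scalar_def U_fam.abs_eq_iff family_eq_def using that by (simp add: ideal_gen.zero)
qed

lemma abs_U_fam_relator: "(\<And>q. F q \<in> relU q) \<Longrightarrow> abs_U_fam F = 0"
  unfolding zero_U_fam_def U_fam.abs_eq_iff family_eq_def by (simp add: ideal_gen.base)

lemma abs_U_fam_eq_0D: "abs_U_fam F = 0 \<Longrightarrow> admissible q \<Longrightarrow> F q \<in> ideal_gen (relU q)"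
  unfolding zero_U_fam_def U_fam.abs_eq_iff family_eq_def by simp

lemma Uq_relations_Uq_gen:
  "Uq_relations (Uq_scalar (\<lambda>q. q)) (Uq_scalar inverse) (Uq_scalar (\<lambda>q. 1 / (q - inverse q))) Uq_gen"
proof (intro Uq_relations.intro Uq_relations_axioms.intro Uq_fam.q_scalars_axioms)
  fix i j :: ix and s :: sg
  note vanish = abs_Uq_fam_relator
  note [simp] = abs_Uq_fam_simps serre_def Uq_fam.sc_power2 Uq_fam.sc_qint3
  show "Uq_gen (Kp i) * Uq_gen (Km i) = 1" "Uq_gen (Km i) * Uq_gen (Kp i) = 1"
    using vanish[OF relUq.intros(1)[where i = i]] vanish[OF relUq.intros(2)[where i = i]] by simp_all
  show "Uq_gen (Kp I0) * Uq_gen (Kp I1) = Uq_gen (Kp I1) * Uq_gen (Kp I0)"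
    using vanish[OF relUq.intros(3)] by simp
  show "Uq_gen (Kp i) * Uq_gen (E Pl i) * Uq_gen (Km i) = Uq_scalar (\<lambda>q. q) * Uq_scalar (\<lambda>q. q) * Uq_gen (E Pl i)"
    "Uq_gen (Kp i) * Uq_gen (E Mi i) * Uq_gen (Km i) = Uq_scalar inverse * Uq_scalar inverse * Uq_gen (E Mi i)"
    using vanish[OF relUq.intros(4)[where i = i and s = Pl]] vanish[OF relUq.intros(4)[where i = i and s = Mi]]
    by simp_all
  show "Uq_gen (Kp i) * Uq_gen (E Pl j) * Uq_gen (Km i) = Uq_scalar inverse * Uq_scalar inverse * Uq_gen (E Pl j)"
    "Uq_gen (Kp i) * Uq_gen (E Mi j) * Uq_gen (Km i) = Uq_scalar (\<lambda>q. q) * Uq_scalar (\<lambda>q. q) * Uq_gen (E Mi j)"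
    if "i \<noteq> j"
    using vanish[OF relUq.intros(5)[where s = Pl, OF that]] vanish[OF relUq.intros(5)[where s = Mi, OF that]]
    by simp_all
  show "Uq_gen (E Pl i) * Uq_gen (E Mi i) - Uq_gen (E Mi i) * Uq_gen (E Pl i)
      = Uq_scalar (\<lambda>q. 1 / (q - inverse q)) * (Uq_gen (Kp i) - Uq_gen (Km i))"
    using vanish[OF relUq.intros(6)[where i = i]] by simp
  show "Uq_gen (E s I0) * Uq_gen (E (flip s) I1) = Uq_gen (E (flip s) I1) * Uq_gen (E s I0)"
    using vanish[OF relUq.intros(7)[where s = s]] by simp
  show "serre_expr (Uq_scalar (\<lambda>q. q) * Uq_scalar (\<lambda>q. q) + 1 + Uq_scalar inverse * Uq_scalar inverse)
      (Uq_gen (E s i)) (Uq_gen (E s j)) = 0" if "i \<noteq> j"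
    using vanish[OF relUq.intros(8)[where s = s, OF that]] by (simp add: serre_expr_def)
qed

lemma subst_relU_in_ideal_gen:
  fixes \<Phi> :: "'k::field \<Rightarrow> gU \<Rightarrow> (gUq, 'k) freealg"
  assumes rels: "U_relations (Uq_scalar (\<lambda>q. q)) (Uq_scalar inverse) (Uq_scalar (\<lambda>q. 1 / (q - inverse q)))
      (\<lambda>g. abs_Uq_fam (\<lambda>q. \<Phi> q g))"
    and "admissible q\<^sub>0" and "r \<in> relU q\<^sub>0"
  shows "subst (\<Phi> q\<^sub>0) r \<in> ideal_gen (relUq q\<^sub>0)"
proof -
  interpret U_relations "Uq_scalar (\<lambda>q. q)" "Uq_scalar inverse" "Uq_scalar (\<lambda>q. 1 / (q - inverse q))"
      "\<lambda>g. abs_Uq_fam (\<lambda>q. \<Phi> q g)"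
    by (rule rels)
  have family: "subst (\<Phi> q\<^sub>0) r \<in> ideal_gen (relUq q\<^sub>0)"
    if "abs_Uq_fam (\<lambda>q. subst (\<Phi> q) (F q)) = 0" "r = F q\<^sub>0" for F
    using abs_Uq_fam_eq_0D[OF that(1) assms(2)] that(2) by simp
  note [simp] = subst_simps abs_Uq_fam_simps serre_def Uq_fam.sc_qint3
  from assms(3) show ?thesis
  proof cases
    case (1 i)
    show ?thesis by (rule family[where F = "\<lambda>q. gen (kp i) \<cdot> gen (km i) - fone"]) (simp_all add: 1 k_km)
  next
    case (2 i)
    show ?thesis by (rule family[where F = "\<lambda>q. gen (km i) \<cdot> gen (kp i) - fone"]) (simp_all add: 2 km_k)
  next
    case (3 g)
    show ?thesis
      by (rule family[where F = "\<lambda>q. gen (kp I0) \<cdot> gen (kp I1) \<cdot> gen g - gen g \<cdot> gen (kp I0) \<cdot> gen (kp I1)"])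
        (simp_all add: 3 k0_k1_central)
  next
    case (4 i)
    show ?thesis
      by (rule family[where F = "\<lambda>q. cst (1 / (q - inverse q)) \<cdot> (cst q \<cdot> gen (Y Pl i) \<cdot> gen (kp i)
          - cst (inverse q) \<cdot> gen (kp i) \<cdot> gen (Y Pl i)) - fone"])
        (simp_all add: 4 yp_k)
  next
    case (5 i)
    show ?thesis
      by (rule family[where F = "\<lambda>q. cst (1 / (q - inverse q)) \<cdot> (cst q \<cdot> gen (kp i) \<cdot> gen (Y Mi i)
          - cst (inverse q) \<cdot> gen (Y Mi i) \<cdot> gen (kp i)) - fone"])
        (simp_all add: 5 k_ym)
  next
    case (6 i)
    show ?thesis
      by (rule family[where F = "\<lambda>q. cst (1 / (q - inverse q)) \<cdot> (cst q \<cdot> gen (Y Mi i) \<cdot> gen (Y Pl i)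
          - cst (inverse q) \<cdot> gen (Y Pl i) \<cdot> gen (Y Mi i)) - fone"])
        (simp_all add: 6 ym_yp)
  next
    case (7 i j)
    show ?thesis
      by (rule family[where F = "\<lambda>q. cst (1 / (q - inverse q)) \<cdot> (cst q \<cdot> gen (Y Pl i) \<cdot> gen (Y Mi j)
          - cst (inverse q) \<cdot> gen (Y Mi j) \<cdot> gen (Y Pl i)) - gen (km I0) \<cdot> gen (km I1)"])
        (simp_all add: 7 yp_ym)
  next
    case (8 i j s)
    show ?thesis
      by (rule family[where F = "\<lambda>q. serre q (gen (Y s i)) (gen (Y s j))"])
        (use y_serre[OF 8(2), of s] in \<open>simp_all add: 8 serre_expr_def\<close>)
  qed
qed

lemma U_relations_U_gen:
  "U_relations (U_scalar (\<lambda>q. q)) (U_scalar inverse) (U_scalar (\<lambda>q. 1 / (q - inverse q))) U_gen"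
proof (intro U_relations.intro U_relations_axioms.intro U_fam.q_scalars_axioms)
  fix i j :: ix and s :: sg and g :: gU
  note vanish = abs_U_fam_relator
  note [simp] = abs_U_fam_simps serre_def U_fam.sc_qint3
  show "U_gen (kp i) * U_gen (km i) = 1" "U_gen (km i) * U_gen (kp i) = 1"
    using vanish[OF relU.intros(1)[where i = i]] vanish[OF relU.intros(2)[where i = i]] by simp_all
  show "U_gen (kp I0) * U_gen (kp I1) * U_gen g = U_gen g * U_gen (kp I0) * U_gen (kp I1)"
    using vanish[OF relU.intros(3)[where g = g]] by simp
  show "U_scalar (\<lambda>q. 1 / (q - inverse q)) * (U_scalar (\<lambda>q. q) * U_gen (Y Pl i) * U_gen (kp i)
      - U_scalar inverse * U_gen (kp i) * U_gen (Y Pl i)) = 1"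
    using vanish[OF relU.intros(4)[where i = i]] by simp
  show "U_scalar (\<lambda>q. 1 / (q - inverse q)) * (U_scalar (\<lambda>q. q) * U_gen (kp i) * U_gen (Y Mi i)
      - U_scalar inverse * U_gen (Y Mi i) * U_gen (kp i)) = 1"
    using vanish[OF relU.intros(5)[where i = i]] by simp
  show "U_scalar (\<lambda>q. 1 / (q - inverse q)) * (U_scalar (\<lambda>q. q) * U_gen (Y Mi i) * U_gen (Y Pl i)
      - U_scalar inverse * U_gen (Y Pl i) * U_gen (Y Mi i)) = 1"
    using vanish[OF relU.intros(6)[where i = i]] by simp
  show "U_scalar (\<lambda>q. 1 / (q - inverse q)) * (U_scalar (\<lambda>q. q) * U_gen (Y Pl i) * U_gen (Y Mi j)
      - U_scalar inverse * U_gen (Y Mi j) * U_gen (Y Pl i)) = U_gen (km I0) * U_gen (km I1)" if "i \<noteq> j"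
    using vanish[OF relU.intros(7)[OF that]] by simp
  show "serre_expr (U_scalar (\<lambda>q. q) * U_scalar (\<lambda>q. q) + 1 + U_scalar inverse * U_scalar inverse)
      (U_gen (Y s i)) (U_gen (Y s j)) = 0" if "i \<noteq> j"
    using vanish[OF relU.intros(8)[where s = s, OF that]] by (simp add: serre_expr_def)
qed

lemma subst_relUq_in_ideal_gen:
  fixes \<Psi> :: "'k::field \<Rightarrow> gUq \<Rightarrow> (gU, 'k) freealg"
  assumes rels: "Uq_relations (U_scalar (\<lambda>q. q)) (U_scalar inverse) (U_scalar (\<lambda>q. 1 / (q - inverse q)))
      (\<lambda>g. abs_U_fam (\<lambda>q. \<Psi> q g))"
    and "admissible q\<^sub>0" and "r \<in> relUq q\<^sub>0"
  shows "subst (\<Psi> q\<^sub>0) r \<in> ideal_gen (relU q\<^sub>0)"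
proof -
  interpret Uq_relations "U_scalar (\<lambda>q. q)" "U_scalar inverse" "U_scalar (\<lambda>q. 1 / (q - inverse q))"
      "\<lambda>g. abs_U_fam (\<lambda>q. \<Psi> q g)"
    by (rule rels)
  have family: "subst (\<Psi> q\<^sub>0) r \<in> ideal_gen (relU q\<^sub>0)"
    if "abs_U_fam (\<lambda>q. subst (\<Psi> q) (F q)) = 0" "r = F q\<^sub>0" for F
    using abs_U_fam_eq_0D[OF that(1) assms(2)] that(2) by simp
  note [simp] = subst_simps abs_U_fam_simps serre_def U_fam.sc_qint3 U_fam.sc_power2
  from assms(3) show ?thesis
  proof cases
    case (1 i)
    show ?thesis by (rule family[where F = "\<lambda>q. gen (Kp i) \<cdot> gen (Km i) - fone"]) (simp_all add: 1 K_Km)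
  next
    case (2 i)
    show ?thesis by (rule family[where F = "\<lambda>q. gen (Km i) \<cdot> gen (Kp i) - fone"]) (simp_all add: 2 Km_K)
  next
    case 3
    show ?thesis
      by (rule family[where F = "\<lambda>q. gen (Kp I0) \<cdot> gen (Kp I1) - gen (Kp I1) \<cdot> gen (Kp I0)"])
        (simp_all add: 3 K0_K1)
  next
    case (4 i s)
    show ?thesis
      by (rule family[where F = "\<lambda>q. gen (Kp i) \<cdot> gen (E s i) \<cdot> gen (Km i) - cst (q2 q s) \<cdot> gen (E s i)"])
        (cases s; simp add: 4 K_Ep_Km K_Em_Km)+
  next
    case (5 i j s)
    show ?thesis
      by (rule family[where F = "\<lambda>q. gen (Kp i) \<cdot> gen (E s j) \<cdot> gen (Km i) - cst (q2 q (flip s)) \<cdot> gen (E s j)"])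
        (cases s; simp add: 5 K_Ep_Km_other K_Em_Km_other)+
  next
    case (6 i)
    show ?thesis
      by (rule family[where F = "\<lambda>q. gen (E Pl i) \<cdot> gen (E Mi i) - gen (E Mi i) \<cdot> gen (E Pl i)
          - cst (1 / (q - inverse q)) \<cdot> (gen (Kp i) - gen (Km i))"])
        (simp_all add: 6 Ep_Em)
  next
    case (7 s)
    show ?thesis
      by (rule family[where F = "\<lambda>q. gen (E s I0) \<cdot> gen (E (flip s) I1) - gen (E (flip s) I1) \<cdot> gen (E s I0)"])
        (simp_all add: 7 E_cross)
  next
    case (8 i j s)
    show ?thesis
      by (rule family[where F = "\<lambda>q. serre q (gen (E s i)) (gen (E s j))"])
        (use E_serre[OF 8(2), of s] in \<open>simp_all add: 8 serre_expr_def\<close>)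
  qed
qed

lemma abs_Uq_fam_phi: "abs_Uq_fam (\<lambda>q. phi q g) = phi_ring Uq_fam.C Uq_gen g"
proof (cases g)
  case (Y s i)
  then show ?thesis by (cases s) (simp_all add: abs_Uq_fam_simps Uq_fam.sc_C)
qed (simp_all add: abs_Uq_fam_simps)

lemma abs_U_fam_psi: "abs_U_fam (\<lambda>q. psi q h) = psi_ring U_fam.C_inv U_gen h"
proof (cases h)
  case (E s i)
  then show ?thesis by (cases s) (simp_all add: abs_U_fam_simps U_fam.sc_C_inv)
qed (simp_all add: abs_U_fam_simps)

lemma abs_Uq_fam_subst_psi:
  "abs_Uq_fam (\<lambda>q. subst (\<Phi> q) (psi q h)) = psi_ring Uq_fam.C_inv (\<lambda>g. abs_Uq_fam (\<lambda>q. \<Phi> q g)) h"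
proof (cases h)
  case (E s i)
  then show ?thesis by (cases s) (simp_all add: subst_simps abs_Uq_fam_simps Uq_fam.sc_C_inv)
qed (simp_all add: subst_simps abs_Uq_fam_simps)

lemma abs_U_fam_subst_phi:
  "abs_U_fam (\<lambda>q. subst (\<Psi> q) (phi q g)) = phi_ring U_fam.C (\<lambda>h. abs_U_fam (\<lambda>q. \<Psi> q h)) g"
proof (cases g)
  case (Y s i)
  then show ?thesis by (cases s) (simp_all add: subst_simps abs_U_fam_simps U_fam.sc_C)
qed (simp_all add: subst_simps abs_U_fam_simps)

lemma U_relations_phi_images:
  "U_relations (Uq_scalar (\<lambda>q. q)) (Uq_scalar inverse) (Uq_scalar (\<lambda>q. 1 / (q - inverse q)))
    (\<lambda>g. abs_Uq_fam (\<lambda>q. phi q g))"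
  unfolding abs_Uq_fam_phi by (rule Uq_relations.U_relations_phi[OF Uq_relations_Uq_gen])

lemma Uq_relations_psi_images:
  "Uq_relations (U_scalar (\<lambda>q. q)) (U_scalar inverse) (U_scalar (\<lambda>q. 1 / (q - inverse q)))
    (\<lambda>h. abs_U_fam (\<lambda>q. psi q h))"
  unfolding abs_U_fam_psi by (rule U_relations.Uq_relations_psi[OF U_relations_U_gen])

lemma psi_phi_gen: "admissible q \<Longrightarrow> subst (psi q) (phi q g) - gen g \<in> ideal_gen (relU q)"
  by (rule abs_U_fam_eq_0D)
    (simp add: abs_U_fam_simps abs_U_fam_subst_phi abs_U_fam_psi U_relations.phi_psi[OF U_relations_U_gen])

lemma phi_psi_gen: "admissible q \<Longrightarrow> subst (phi q) (psi q h) - gen h \<in> ideal_gen (relUq q)"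
  by (rule abs_Uq_fam_eq_0D)
    (simp add: abs_Uq_fam_simps abs_Uq_fam_subst_psi abs_Uq_fam_phi Uq_relations.psi_phi[OF Uq_relations_Uq_gen])

theorem theorem2p1:
  fixes q :: "'k::field"
  assumes "alg_closed TYPE('k)"
    and "q \<noteq> 0"
    and "\<forall>n>0. q ^ n \<noteq> 1"
  shows "(\<forall>p \<in> ideal_gen (relU q). subst (phi q) p \<in> ideal_gen (relUq q))
       \<and> (\<forall>p \<in> ideal_gen (relUq q). subst (psi q) p \<in> ideal_gen (relU q))
       \<and> (\<forall>p. subst (psi q) (subst (phi q) p) - p \<in> ideal_gen (relU q))
       \<and> (\<forall>p. subst (phi q) (subst (psi q) p) - p \<in> ideal_gen (relUq q))"
proof (intro conjI ballI allI)
  have q: "admissible q" using assms(2,3) by (rule admissibleI)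
  show "subst (phi q) p \<in> ideal_gen (relUq q)" if "p \<in> ideal_gen (relU q)" for p
    using subst_ideal_gen[OF subst_relU_in_ideal_gen[OF U_relations_phi_images q] that] .
  show "subst (psi q) p \<in> ideal_gen (relU q)" if "p \<in> ideal_gen (relUq q)" for p
    using subst_ideal_gen[OF subst_relUq_in_ideal_gen[OF Uq_relations_psi_images q] that] .
  show "subst (psi q) (subst (phi q) p) - p \<in> ideal_gen (relU q)" for p
    using subst_diff_in_ideal_gen[where \<chi> = "\<lambda>g. subst (psi q) (phi q g)" and \<chi>' = gen, OF psi_phi_gen[OF q]]
    by (simp add: subst_subst subst_gen_id)
  show "subst (phi q) (subst (psi q) p) - p \<in> ideal_gen (relUq q)" for p
    using subst_diff_in_ideal_gen[where \<chi> = "\<lambda>h. subst (phi q) (psi q h)" and \<chi>' = gen, OF phi_psi_gen[OF q]]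
    by (simp add: subst_subst subst_gen_id)
qed

end
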